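(* Let $h$ be a positive integer and $L$ an $h$-modular lattice with zero. Let $x\in\mathcal{A}'$ and let $n,k$ be nonnegative integers. If $n\geq d(x)$, then $x^{(k)}(a_n)=x(a_\infty)$ and $x^{(k)}(b_n)=x(b_\infty)$. In particular, $d(x^{(k)})\leq d(x)$.
   Context: $K$ is the lattice consisting of $\varnothing$, $C=\{c\}$, $A_m=\{a_k:k\geq m\}$, $B_n=\{b_k:k\geq n\}$ ($m,n<\omega$), and $C\cup A_m\cup B_n$ with $|m-n|\leq1$, ordered by inclusion; $a_n,b_n,c$ denote $A_n,B_n,C$, so $\mathrm{J}(K)=\{c\}\cup\{a_n\}\cup\{b_n\}$ with $a_0>a_1>\cdots$, $b_0>b_1>\cdots$ and no other comparabilities. $\mathcal{A}$ is the set of antitone maps $x\colon\mathrm{J}(K)\to L$ ($p\leq q\Rightarrow x(p)\geq x(q)$) with finite range. For $x\in\mathcal{A}$, $x(a_\infty)$, $x(b_\infty)$ are the eventual values of the increasing sequences $(x(a_n))$, $(x(b_n))$, and $d(x)$ is the least $d\geq0$ with $x(a_n)=x(a_\infty)$ and $x(b_n)=x(b_\infty)$ for all $n\geq d$. The map $x^{(1)}$ is defined by $x^{(1)}(c)=x(c)\vee(x(a_\infty)\wedge x(b_\infty))$, $x^{(1)}(a_0)=x(a_0)$, $x^{(1)}(b_0)=x(b_0)$, $x^{(1)}(a_{n+1})=x(a_{n+1})\vee(x(b_n)\wedge x(c))$, $x^{(1)}(b_{n+1})=x(b_{n+1})\vee(x(a_n)\wedge x(c))$; $\mathcal{A}$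 is closed under $x\mapsto x^{(1)}$, and $x^{(0)}=x$, $x^{(k+1)}=(x^{(k)})^{(1)}$. Put $\ell(x)=\langle x(a_\infty),x(b_\infty),x(c)\rangle$ and $\mathcal{A}'=\{x\in\mathcal{A}:\ell(x^{(1)})=\ell(x)\}$. $L$ is $h$-modular if $u^{(h+1)}=u^{(h)}$ for all $u\in L^3$, where $\langle x,y,z\rangle^{(1)}=\langle x\vee(y\wedge z),y\vee(x\wedge z),z\vee(x\wedge y)\rangle$. *)

theory Defs
  imports Main
begin

text \<open>Join-irreducibles of K: c, a_n, b_n.\<close>
datatype jk = C | A nat | B nat

fun jle :: "jk \<Rightarrow> jk \<Rightarrow> bool" where
  "jle C C = True"
| "jle (A m) (A n) = (n \<le> m)"
| "jle (B m) (B n) = (n \<le> m)"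
| "jle _ _ = False"

definition antitone_J :: "(jk \<Rightarrow> 'a::order) \<Rightarrow> bool" where
  "antitone_J x \<longleftrightarrow> (\<forall>p q. jle p q \<longrightarrow> x q \<le> x p)"

definition calA :: "(jk \<Rightarrow> 'a::lattice) set" where
  "calA = {x. antitone_J x \<and> finite (range x)}"

definition ainf :: "(jk \<Rightarrow> 'a) \<Rightarrow> 'a" where
  "ainf x = (THE v. \<exists>N. \<forall>n\<ge>N. x (A n) = v)"

definition binf :: "(jk \<Rightarrow> 'a) \<Rightarrow> 'a" where
  "binf x = (THE v. \<exists>N. \<forall>n\<ge>N. x (B n) = v)"

definition dd :: "(jk \<Rightarrow> 'a) \<Rightarrow> nat" where
  "dd x = (LEAST d. \<forall>n\<ge>d. x (A n) = ainf x \<and> x (B n) = binf x)"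

fun step :: "(jk \<Rightarrow> 'a::lattice) \<Rightarrow> jk \<Rightarrow> 'a" where
  "step x C = sup (x C) (inf (ainf x) (binf x))"
| "step x (A 0) = x (A 0)"
| "step x (B 0) = x (B 0)"
| "step x (A (Suc n)) = sup (x (A (Suc n))) (inf (x (B n)) (x C))"
| "step x (B (Suc n)) = sup (x (B (Suc n))) (inf (x (A n)) (x C))"

definition ell :: "(jk \<Rightarrow> 'a) \<Rightarrow> 'a \<times> 'a \<times> 'a" where
  "ell x = (ainf x, binf x, x C)"

definition calA' :: "(jk \<Rightarrow> 'a::lattice) set" where
  "calA' = {x \<in> calA. ell (step x) = ell x}"

fun tstep :: "'a::lattice \<times> 'a \<times> 'a \<Rightarrow> 'a \<times> 'a \<times> 'a" where
  "tstep (x, y, z) = (sup x (inf y z), sup y (inf x z), sup z (inf x y))"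

definition h_modular :: "nat \<Rightarrow> 'a::lattice itself \<Rightarrow> bool" where
  "h_modular h _ \<longleftrightarrow> (\<forall>u :: 'a \<times> 'a \<times> 'a. (tstep ^^ (h + 1)) u = (tstep ^^ h) u)"

end

theory Submission
  imports Defs "HOL-Library.Infinite_Set"
begin

text \<open>
  Write \<open>a = x(a\<^sub>\<infinity>)\<close>, \<open>b = x(b\<^sub>\<infinity>)\<close>, \<open>c = x(c)\<close>. Reading \<open>\<ell>(x\<^sup>(\<^sup>1\<^sup>)) = \<ell>(x)\<close> off the
  tails of \<open>x\<^sup>(\<^sup>1\<^sup>)\<close> gives \<open>b \<sqinter> c \<le> a\<close>, \<open>a \<sqinter> c \<le> b\<close> and \<open>a \<sqinter> b \<le> c\<close>. Now let \<open>y\<close> be any map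
  with \<open>y(c) = c\<close>, all values on the \<open>a\<close>-chain below \<open>a\<close>, all values on the \<open>b\<close>-chain below \<open>b\<close>,
  and \<open>y(a\<^sub>n) = a\<close>, \<open>y(b\<^sub>n) = b\<close> for \<open>n \<ge> d(x)\<close>. By the three inequalities every join
  performed by \<open>y \<mapsto> y\<^sup>(\<^sup>1\<^sup>)\<close> adds an element below the value already bounding that position,
  so \<open>y\<^sup>(\<^sup>1\<^sup>)\<close> has the same properties, and by induction so has every \<open>x\<^sup>(\<^sup>k\<^sup>)\<close>.
\<close>

lemma mono_finite_range_eventually_const:
  fixes f :: "nat \<Rightarrow> 'a::order"
  assumes "mono f" and "finite (range f)"
  shows "\<exists>N. \<forall>n\<ge>N. f n = f N"
proof -
  obtain v where "infinite (f -` {v})"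
    using inf_img_fin_dom[OF assms(2)] by auto
  then have unbounded: "\<exists>m\<ge>n. f m = v" for n
    using infinite_nat_iff_unbounded_le by auto
  then obtain N where N: "f N = v" by blast
  have "f n = v" if "N \<le> n" for n
  proof -
    obtain m where "n \<le> m" "f m = v" using unbounded by blast
    then have "f n \<le> v" using \<open>mono f\<close> by (metis monoD)
    moreover have "v \<le> f n" using \<open>mono f\<close> N that by (metis monoD)
    ultimately show ?thesis by simp
  qed
  then show ?thesis using N by auto
qed

lemma The_eventual_value:
  fixes f :: "nat \<Rightarrow> 'a"
  assumes "\<forall>n\<ge>N. f n = v"
  shows "(THE v. \<exists>N. \<forall>n\<ge>N. f n = v) = v"
proof (rule the_equality)
  fix w assume "\<exists>M. \<forall>n\<ge>M. f n = w"
  then obtain M where "\<forall>n\<ge>M. f n = w" by blast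
  with assms show "w = v" by (metis max.cobounded1 max.cobounded2)
qed (use assms in blast)

lemma ainf_eqI: "\<forall>n\<ge>N. x (A n) = v \<Longrightarrow> ainf x = v"
  unfolding ainf_def by (rule The_eventual_value)

lemma binf_eqI: "\<forall>n\<ge>N. x (B n) = v \<Longrightarrow> binf x = v"
  unfolding binf_def by (rule The_eventual_value)

lemma eventual_value_mono:
  fixes f :: "nat \<Rightarrow> 'a::order"
  assumes "mono f" and "finite (range f)"
  defines "v \<equiv> THE v. \<exists>N. \<forall>n\<ge>N. f n = v"
  shows "\<exists>N. \<forall>n\<ge>N. f n = v" and "f n \<le> v"
proof -
  obtain N where N: "\<forall>n\<ge>N. f n = f N"
    using mono_finite_range_eventually_const[OF assms(1,2)] by blast
  moreover have "v = f N"
    unfolding v_def using The_eventual_value[OF N] .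
  ultimately show "\<exists>N. \<forall>n\<ge>N. f n = v"
    by metis
  have "f n \<le> f (max n N)"
    using monoD[OF \<open>mono f\<close> max.cobounded1] .
  also have "\<dots> = v"
    using N \<open>v = f N\<close> by (metis max.cobounded2)
  finally show "f n \<le> v" .
qed

lemma antitone_J_mono_chains:
  assumes "antitone_J x"
  shows "mono (\<lambda>n. x (A n))" and "mono (\<lambda>n. x (B n))"
  using assms unfolding antitone_J_def mono_def by (metis jle.simps(2), metis jle.simps(3))

lemma calA_tails:
  assumes "x \<in> calA"
  shows "\<exists>N. \<forall>n\<ge>N. x (A n) = ainf x" and "x (A n) \<le> ainf x"
    and "\<exists>N. \<forall>n\<ge>N. x (B n) = binf x" and "x (B n) \<le> binf x"
proof -
  have "antitone_J x" and fin: "finite (range x)"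
    using assms by (simp_all add: calA_def)
  then have "mono (\<lambda>n. x (A n))" and "mono (\<lambda>n. x (B n))"
    by (simp_all add: antitone_J_mono_chains)
  moreover have "finite (range (\<lambda>n. x (A n)))" and "finite (range (\<lambda>n. x (B n)))"
    using fin by (auto intro: finite_subset[rotated])
  ultimately show "\<exists>N. \<forall>n\<ge>N. x (A n) = ainf x" and "x (A n) \<le> ainf x"
    and "\<exists>N. \<forall>n\<ge>N. x (B n) = binf x" and "x (B n) \<le> binf x"
    unfolding ainf_def binf_def
    by (simp_all add: eventual_value_mono[of "\<lambda>n. x (A n)"] eventual_value_mono[of "\<lambda>n. x (B n)"])
qed

definition settled_from :: "nat \<Rightarrow> 'a::order \<Rightarrow> 'a \<Rightarrow> 'a \<Rightarrow> (jk \<Rightarrow> 'a) \<Rightarrow> bool" where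
  "settled_from d a b c y \<longleftrightarrow>
     y C = c \<and> (\<forall>n. y (A n) \<le> a \<and> y (B n) \<le> b) \<and> (\<forall>n\<ge>d. y (A n) = a \<and> y (B n) = b)"

lemma settled_from_limits:
  assumes "settled_from d a b c y"
  shows "ainf y = a" and "binf y = b"
  using assms unfolding settled_from_def by (auto intro: ainf_eqI binf_eqI)

lemma dd_le_settled_from:
  assumes "settled_from d a b c y"
  shows "dd y \<le> d"
  unfolding dd_def
  by (rule Least_le) (use assms settled_from_limits[OF assms] in \<open>simp add: settled_from_def\<close>)

lemma calA_settled_from_dd:
  assumes "x \<in> calA"
  shows "settled_from (dd x) (ainf x) (binf x) (x C) x"
proof -
  obtain NA NB where "\<forall>n\<ge>NA. x (A n) = ainf x" and "\<forall>n\<ge>NB. x (B n) = binf x"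
    using calA_tails(1,3)[OF assms] by metis
  then have "\<forall>n\<ge>max NA NB. x (A n) = ainf x \<and> x (B n) = binf x" by simp
  then have "\<forall>n\<ge>dd x. x (A n) = ainf x \<and> x (B n) = binf x"
    unfolding dd_def by (rule LeastI)
  then show ?thesis
    using calA_tails(2,4)[OF assms] by (simp add: settled_from_def)
qed

lemma limits_step:
  assumes "\<forall>n\<ge>d. x (A n) = a \<and> x (B n) = b"
  shows "ainf (step x) = sup a (inf b (x C))" and "binf (step x) = sup b (inf a (x C))"
proof -
  have "step x (A n) = sup a (inf b (x C)) \<and> step x (B n) = sup b (inf a (x C))"
    if n: "Suc d \<le> n" for n
  proof -
    obtain m where "n = Suc m" and "d \<le> m"
      using n by (auto dest: Suc_le_D)
    then show ?thesis
      using assms by simp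
  qed
  then show "ainf (step x) = sup a (inf b (x C))" and "binf (step x) = sup b (inf a (x C))"
    using ainf_eqI[of "Suc d" "step x"] binf_eqI[of "Suc d" "step x"] by simp_all
qed

lemma calA'_meets_le:
  assumes "x \<in> calA'"
  shows "inf (binf x) (x C) \<le> ainf x" and "inf (ainf x) (x C) \<le> binf x"
    and "inf (ainf x) (binf x) \<le> x C"
proof -
  have "x \<in> calA" and ell: "ell (step x) = ell x"
    using assms by (auto simp: calA'_def)
  then have "\<forall>n\<ge>dd x. x (A n) = ainf x \<and> x (B n) = binf x"
    using calA_settled_from_dd[of x] by (simp add: settled_from_def)
  note limits = limits_step[OF this]
  from ell have "ainf (step x) = ainf x" and "binf (step x) = binf x" and "step x C = x C"
    by (simp_all add: ell_def)
  then have "sup (ainf x) (inf (binf x) (x C)) = ainf x"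
    and "sup (binf x) (inf (ainf x) (x C)) = binf x"
    and "sup (x C) (inf (ainf x) (binf x)) = x C"
    by (simp_all only: limits step.simps)
  then show "inf (binf x) (x C) \<le> ainf x" and "inf (ainf x) (x C) \<le> binf x"
    and "inf (ainf x) (binf x) \<le> x C"
    by (simp_all add: sup.absorb_iff1)
qed

lemma settled_from_step:
  fixes y :: "jk \<Rightarrow> 'a::lattice"
  assumes "inf b c \<le> a" and "inf a c \<le> b" and "inf a b \<le> c"
    and settled: "settled_from d a b c y"
  shows "settled_from d a b c (step y)"
proof -
  have y: "y C = c" "\<And>n. y (A n) \<le> a" "\<And>n. y (B n) \<le> b"
    "\<And>n. d \<le> n \<Longrightarrow> y (A n) = a \<and> y (B n) = b"
    using settled by (auto simp: settled_from_def)
  have "step y C = c"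
    using y(1) settled_from_limits[OF settled] assms(3) by (simp add: sup_absorb1)
  moreover have le: "step y (A n) \<le> a \<and> step y (B n) \<le> b" for n
  proof (cases n)
    case (Suc m)
    have "inf (y (B m)) c \<le> a" "inf (y (A m)) c \<le> b"
      using y(2,3)[of m] assms(1,2) by (meson inf_mono order_refl order_trans)+
    then show ?thesis
      using Suc y by simp
  qed (simp add: y)
  moreover have "step y (A n) = a \<and> step y (B n) = b" if "d \<le> n" for n
  proof -
    have "a \<le> step y (A n) \<and> b \<le> step y (B n)"
      using y(4)[OF that] by (cases n) (auto intro: le_supI1)
    then show ?thesis
      using le[of n] by (simp add: order.eq_iff)
  qed
  ultimately show ?thesis
    unfolding settled_from_def by simp
qed

theorem lemma5p4:
  fixes h :: nat and x :: "jk \<Rightarrow> 'a::bounded_lattice_bot"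
  assumes "h > 0" and "h_modular h TYPE('a)" and "x \<in> calA'"
  shows "(\<forall>n k. n \<ge> dd x \<longrightarrow>
            (step ^^ k) x (A n) = ainf x \<and> (step ^^ k) x (B n) = binf x)
         \<and> (\<forall>k. dd ((step ^^ k) x) \<le> dd x)"
proof -
  have "x \<in> calA" using assms(3) by (simp add: calA'_def)
  have settled: "settled_from (dd x) (ainf x) (binf x) (x C) ((step ^^ k) x)" for k
  proof (induction k)
    case 0
    show ?case using calA_settled_from_dd[OF \<open>x \<in> calA\<close>] by simp
  next
    case (Suc k)
    then show ?case
      using settled_from_step[OF calA'_meets_le[OF assms(3)]] by simp
  qed
  have "n \<ge> dd x \<Longrightarrow> (step ^^ k) x (A n) = ainf x \<and> (step ^^ k) x (B n) = binf x" for n k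
    using settled[of k] by (simp add: settled_from_def)
  moreover have "dd ((step ^^ k) x) \<le> dd x" for k
    using dd_le_settled_from[OF settled] .
  ultimately show ?thesis by blast
qed

end
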